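(* Let $R$ be a schematic semi-graded ring and $J$ a compatible semi-graded ideal of $R$. If $E$ is an LSG $R$-module that is $T$-closed in $\mathsf{LSG}\text{-}R$, then $f^!(E)$ (the largest SG $R$-submodule of $E$ annihilated by $J$, viewed as an $R/J$-module) is an LSG $R/J$-module that is $T$-closed in $\mathsf{LSG}\text{-}R/J$.
   Context: Rings are associative with $1$; modules are left modules. A ring $R$ is semi-graded (SG) if there are additive subgroups $R_n$ ($n\in\mathbb{Z}$) with $R=\bigoplus_n R_n$, $R_mR_n\subseteq\bigoplus_{k\le m+n}R_k$, and $1\in R_0$; positively SG if $R_n=0$ for $n<0$. An $R$-module $M$ is SG if $M=\bigoplus_nM_n$ with $R_mM_n\subseteq\bigoplus_{k\le m+n}M_k$ for $m\ge0$; homomorphisms are homogeneous if they preserve degrees; SG submodules are submodules $N$ with $N=\bigoplus(N\cap M_n)$. An SG ideal $J$ is a two-sided ideal that is an SG submodule of $R$; $R/J$ is SG with $(R/J)_n=(R_n+J)/J$. $f^!(E)$ is an SG $R/J$-module via $\overline r m=rm$, with $f^!(E)_n=f^!(E)\cap E_n$. Let $R'_n=\{r\in R_n: rh\in R_{n+m}\ \forall m,\forall h\in R_m\}$, $R''_n=\{r\in R'_n: hr\in R_{n+m}\ \forall m,\forall h\in R_m\}$, $R'=\bigcup R'_n$, $R''=\bigcup R''_n$, similarly for $R/J$. $M$ is LSG if $R'_nM_m\subseteq M_{n+m}$; $\mathsf{LSG}\text{-}R$ is the category of LSG modules with homogeneous homomorphisms. $J$ is compatible if the image of $R'$ in $R/J$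 is $(R/J)'$. A left Ore set $S$ is good if $S\subseteq R''$ and for $s\in S,r\in R'$ there are $u\in R'$, $v\in S$ with $us=vr$. $R_{\ge t}$ is the intersection of all SG ideals containing $\bigoplus_{k\ge t}R_k$ (likewise $(R/J)_{\ge t}$). $m\in M$ is torsion if $(R_{\ge t})^nm=0$ for some $n,t\ge0$; $M$ is torsion if all its elements are. $R$ is schematic if it is positively SG, left Noetherian, and there is a finite set $I$ of good left Ore sets $S$ with $S\cap\bigoplus_{k\ge1}R_k\ne\emptyset$ such that for each $(x_S)\in\prod_{S\in I}S$ there are $t,m$ with $(R_{\ge t})^m\subseteq\sum_SRx_S$. An object $E$ of $\mathsf{LSG}\text{-}R$ is $T$-closed if for every object $M$, every SG submodule $N$ with $M/N$ torsion, every morphism $N\to E$ extends uniquely to a morphism $M\to E$ (equivalently $E$ is torsion-free and has the extension property); the same definition applies over $R/J$ with $(R/J)_{\ge t}$. *)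

theory Defs
  imports "HOL-Algebra.Module" "HOL-Algebra.QuotRing" "HOL-Algebra.Ideal_Product"
begin

definition gsub :: "('a, 'b) ring_scheme \<Rightarrow> (int \<Rightarrow> 'a set) \<Rightarrow> int set \<Rightarrow> 'a set" where
  "gsub G g A = {finsum G c S | c S. finite S \<and> S \<subseteq> A \<and> (\<forall>k\<in>S. c k \<in> g k)}"

definition graded_sum :: "('a, 'b) ring_scheme \<Rightarrow> (int \<Rightarrow> 'a set) \<Rightarrow> bool" where
  "graded_sum G g \<longleftrightarrow>
     (\<forall>n. additive_subgroup (g n) G) \<and>
     (\<forall>x\<in>carrier G. \<exists>!c. (\<forall>n. c n \<in> g n) \<and> finite {n. c n \<noteq> \<zero>\<^bsub>G\<^esub>} \<and>
                          x = finsum G c {n. c n \<noteq> \<zero>\<^bsub>G\<^esub>})"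

definition SG_ring :: "('a, 'b) ring_scheme \<Rightarrow> (int \<Rightarrow> 'a set) \<Rightarrow> bool" where
  "SG_ring R g \<longleftrightarrow> ring R \<and> graded_sum R g \<and>
     (\<forall>m n. \<forall>x\<in>g m. \<forall>y\<in>g n. x \<otimes>\<^bsub>R\<^esub> y \<in> gsub R g {..m+n}) \<and> \<one>\<^bsub>R\<^esub> \<in> g 0"

definition pos_SG_ring :: "('a, 'b) ring_scheme \<Rightarrow> (int \<Rightarrow> 'a set) \<Rightarrow> bool" where
  "pos_SG_ring R g \<longleftrightarrow> SG_ring R g \<and> (\<forall>n<0. g n = {\<zero>\<^bsub>R\<^esub>})"

definition Rp_n :: "('a, 'b) ring_scheme \<Rightarrow> (int \<Rightarrow> 'a set) \<Rightarrow> int \<Rightarrow> 'a set" where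
  "Rp_n R g n = {r \<in> g n. \<forall>m. \<forall>h\<in>g m. r \<otimes>\<^bsub>R\<^esub> h \<in> g (n + m)}"

definition Rpp_n :: "('a, 'b) ring_scheme \<Rightarrow> (int \<Rightarrow> 'a set) \<Rightarrow> int \<Rightarrow> 'a set" where
  "Rpp_n R g n = {r \<in> Rp_n R g n. \<forall>m. \<forall>h\<in>g m. h \<otimes>\<^bsub>R\<^esub> r \<in> g (n + m)}"

definition Rp :: "('a, 'b) ring_scheme \<Rightarrow> (int \<Rightarrow> 'a set) \<Rightarrow> 'a set" where
  "Rp R g = (\<Union>n. Rp_n R g n)"

definition Rpp :: "('a, 'b) ring_scheme \<Rightarrow> (int \<Rightarrow> 'a set) \<Rightarrow> 'a set" where
  "Rpp R g = (\<Union>n. Rpp_n R g n)"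

definition SG_ideal :: "('a, 'b) ring_scheme \<Rightarrow> (int \<Rightarrow> 'a set) \<Rightarrow> 'a set \<Rightarrow> bool" where
  "SG_ideal R g J \<longleftrightarrow> ideal J R \<and> J = gsub R (\<lambda>n. J \<inter> g n) UNIV"

definition R_ge :: "('a, 'b) ring_scheme \<Rightarrow> (int \<Rightarrow> 'a set) \<Rightarrow> int \<Rightarrow> 'a set" where
  "R_ge R g t = \<Inter>{J. SG_ideal R g J \<and> gsub R g {t..} \<subseteq> J}"

primrec ideal_pow :: "('a, 'b) ring_scheme \<Rightarrow> 'a set \<Rightarrow> nat \<Rightarrow> 'a set" where
  "ideal_pow R I 0 = carrier R"
| "ideal_pow R I (Suc n) = ideal_prod R I (ideal_pow R I n)"

definition quot_grading :: "('a, 'b) ring_scheme \<Rightarrow> (int \<Rightarrow> 'a set) \<Rightarrow> 'a set \<Rightarrow> int \<Rightarrow> 'a set set" where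
  "quot_grading R g J n = {J +>\<^bsub>R\<^esub> r | r. r \<in> g n}"

definition compatible_ideal :: "('a, 'b) ring_scheme \<Rightarrow> (int \<Rightarrow> 'a set) \<Rightarrow> 'a set \<Rightarrow> bool" where
  "compatible_ideal R g J \<longleftrightarrow>
     {J +>\<^bsub>R\<^esub> r | r. r \<in> Rp R g} = Rp (R Quot J) (quot_grading R g J)"

definition left_ideal :: "('a, 'b) ring_scheme \<Rightarrow> 'a set \<Rightarrow> bool" where
  "left_ideal R L \<longleftrightarrow> additive_subgroup L R \<and>
     (\<forall>r\<in>carrier R. \<forall>x\<in>L. r \<otimes>\<^bsub>R\<^esub> x \<in> L)"

definition left_noetherian :: "('a, 'b) ring_scheme \<Rightarrow> bool" where
  "left_noetherian R \<longleftrightarrow>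
     (\<forall>L :: nat \<Rightarrow> 'a set. (\<forall>n. left_ideal R (L n)) \<and> mono L \<longrightarrow>
        (\<exists>n. \<forall>m\<ge>n. L m = L n))"

definition left_ore_set :: "('a, 'b) ring_scheme \<Rightarrow> 'a set \<Rightarrow> bool" where
  "left_ore_set R S \<longleftrightarrow> S \<subseteq> carrier R \<and> \<one>\<^bsub>R\<^esub> \<in> S \<and>
     (\<forall>s\<in>S. \<forall>s'\<in>S. s \<otimes>\<^bsub>R\<^esub> s' \<in> S) \<and>
     (\<forall>s\<in>S. \<forall>r\<in>carrier R. \<exists>s'\<in>S. \<exists>r'\<in>carrier R. s' \<otimes>\<^bsub>R\<^esub> r = r' \<otimes>\<^bsub>R\<^esub> s)"

definition good_ore_set :: "('a, 'b) ring_scheme \<Rightarrow> (int \<Rightarrow> 'a set) \<Rightarrow> 'a set \<Rightarrow> bool" where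
  "good_ore_set R g S \<longleftrightarrow> left_ore_set R S \<and> S \<subseteq> Rpp R g \<and>
     (\<forall>s\<in>S. \<forall>r\<in>Rp R g. \<exists>u\<in>Rp R g. \<exists>v\<in>S. u \<otimes>\<^bsub>R\<^esub> s = v \<otimes>\<^bsub>R\<^esub> r)"

definition left_span :: "('a, 'b) ring_scheme \<Rightarrow> 'c set \<Rightarrow> ('c \<Rightarrow> 'a) \<Rightarrow> 'a set" where
  "left_span R I x = {finsum R (\<lambda>S. r S \<otimes>\<^bsub>R\<^esub> x S) I | r. r \<in> I \<rightarrow> carrier R}"

definition schematic :: "('a, 'b) ring_scheme \<Rightarrow> (int \<Rightarrow> 'a set) \<Rightarrow> bool" where
  "schematic R g \<longleftrightarrow> pos_SG_ring R g \<and> left_noetherian R \<and>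
     (\<exists>I :: 'a set set. finite I \<and> (\<forall>S\<in>I. good_ore_set R g S) \<and>
        (\<forall>S\<in>I. S \<inter> gsub R g {1..} \<noteq> {}) \<and>
        (\<forall>x. (\<forall>S\<in>I. x S \<in> S) \<longrightarrow>
           (\<exists>t m. ideal_pow R (R_ge R g t) m \<subseteq> left_span R I x)))"

definition lmodule :: "('a, 'b) ring_scheme \<Rightarrow> ('a, 'm) module \<Rightarrow> bool" where
  "lmodule R M \<longleftrightarrow> ring R \<and> abelian_group M \<and>
     (\<forall>a\<in>carrier R. \<forall>x\<in>carrier M. a \<odot>\<^bsub>M\<^esub> x \<in> carrier M) \<and>
     (\<forall>a\<in>carrier R. \<forall>b\<in>carrier R. \<forall>x\<in>carrier M.
        (a \<oplus>\<^bsub>R\<^esub> b) \<odot>\<^bsub>M\<^esub> x = a \<odot>\<^bsub>M\<^esub> x \<oplus>\<^bsub>M\<^esub> b \<odot>\<^bsub>M\<^esub> x) \<and>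
     (\<forall>a\<in>carrier R. \<forall>x\<in>carrier M. \<forall>y\<in>carrier M.
        a \<odot>\<^bsub>M\<^esub> (x \<oplus>\<^bsub>M\<^esub> y) = a \<odot>\<^bsub>M\<^esub> x \<oplus>\<^bsub>M\<^esub> a \<odot>\<^bsub>M\<^esub> y) \<and>
     (\<forall>a\<in>carrier R. \<forall>b\<in>carrier R. \<forall>x\<in>carrier M.
        (a \<otimes>\<^bsub>R\<^esub> b) \<odot>\<^bsub>M\<^esub> x = a \<odot>\<^bsub>M\<^esub> (b \<odot>\<^bsub>M\<^esub> x)) \<and>
     (\<forall>x\<in>carrier M. \<one>\<^bsub>R\<^esub> \<odot>\<^bsub>M\<^esub> x = x)"

definition SG_module :: "('a, 'b) ring_scheme \<Rightarrow> (int \<Rightarrow> 'a set) \<Rightarrow>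
    ('a, 'm) module \<Rightarrow> (int \<Rightarrow> 'm set) \<Rightarrow> bool" where
  "SG_module R g M gM \<longleftrightarrow> SG_ring R g \<and> lmodule R M \<and> graded_sum M gM \<and>
     (\<forall>m n. m \<ge> 0 \<longrightarrow> (\<forall>r\<in>g m. \<forall>x\<in>gM n. r \<odot>\<^bsub>M\<^esub> x \<in> gsub M gM {..m+n}))"

definition LSG_module :: "('a, 'b) ring_scheme \<Rightarrow> (int \<Rightarrow> 'a set) \<Rightarrow>
    ('a, 'm) module \<Rightarrow> (int \<Rightarrow> 'm set) \<Rightarrow> bool" where
  "LSG_module R g M gM \<longleftrightarrow> SG_module R g M gM \<and>
     (\<forall>n m. \<forall>r\<in>Rp_n R g n. \<forall>x\<in>gM m. r \<odot>\<^bsub>M\<^esub> x \<in> gM (n + m))"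

definition submodule_set :: "('a, 'b) ring_scheme \<Rightarrow> ('a, 'm) module \<Rightarrow> 'm set \<Rightarrow> bool" where
  "submodule_set R M N \<longleftrightarrow> N \<subseteq> carrier M \<and> \<zero>\<^bsub>M\<^esub> \<in> N \<and>
     (\<forall>x\<in>N. \<forall>y\<in>N. x \<oplus>\<^bsub>M\<^esub> y \<in> N) \<and>
     (\<forall>a\<in>carrier R. \<forall>x\<in>N. a \<odot>\<^bsub>M\<^esub> x \<in> N)"

definition SG_submodule :: "('a, 'b) ring_scheme \<Rightarrow> ('a, 'm) module \<Rightarrow> (int \<Rightarrow> 'm set) \<Rightarrow> 'm set \<Rightarrow> bool" where
  "SG_submodule R M gM N \<longleftrightarrow> submodule_set R M N \<and> N = gsub M (\<lambda>n. N \<inter> gM n) UNIV"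

definition quotient_torsion :: "('a, 'b) ring_scheme \<Rightarrow> (int \<Rightarrow> 'a set) \<Rightarrow>
    ('a, 'm) module \<Rightarrow> 'm set \<Rightarrow> bool" where
  "quotient_torsion R g M N \<longleftrightarrow>
     (\<forall>x\<in>carrier M. \<exists>n::nat. \<exists>t::int. t \<ge> 0 \<and>
        (\<forall>a\<in>ideal_pow R (R_ge R g t) n. a \<odot>\<^bsub>M\<^esub> x \<in> N))"

definition gr_hom :: "('a, 'b) ring_scheme \<Rightarrow> ('a, 'm) module \<Rightarrow> (int \<Rightarrow> 'm set) \<Rightarrow>
    ('a, 'e) module \<Rightarrow> (int \<Rightarrow> 'e set) \<Rightarrow> ('m \<Rightarrow> 'e) \<Rightarrow> bool" where
  "gr_hom R M gM E gE f \<longleftrightarrow> f ` carrier M \<subseteq> carrier E \<and>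
     (\<forall>x\<in>carrier M. \<forall>y\<in>carrier M. f (x \<oplus>\<^bsub>M\<^esub> y) = f x \<oplus>\<^bsub>E\<^esub> f y) \<and>
     (\<forall>a\<in>carrier R. \<forall>x\<in>carrier M. f (a \<odot>\<^bsub>M\<^esub> x) = a \<odot>\<^bsub>E\<^esub> f x) \<and>
     (\<forall>n. f ` gM n \<subseteq> gE n)"

text \<open>E is T-closed in LSG-R.  Objects M range over LSG modules whose elements
  live in the type 'm (HOL cannot quantify over all types inside a formula).\<close>
definition T_closed :: "'m itself \<Rightarrow> ('a, 'b) ring_scheme \<Rightarrow> (int \<Rightarrow> 'a set) \<Rightarrow>
    ('a, 'e) module \<Rightarrow> (int \<Rightarrow> 'e set) \<Rightarrow> bool" where
  "T_closed _ R g E gE \<longleftrightarrow> LSG_module R g E gE \<and>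
     (\<forall>(M :: ('a, 'm) module) gM N \<phi>.
        LSG_module R g M gM \<and> SG_submodule R M gM N \<and> quotient_torsion R g M N \<and>
        gr_hom R (M\<lparr>carrier := N\<rparr>) (\<lambda>n. N \<inter> gM n) E gE \<phi> \<longrightarrow>
        (\<exists>\<psi>. gr_hom R M gM E gE \<psi> \<and> (\<forall>x\<in>N. \<psi> x = \<phi> x)) \<and>
        (\<forall>\<psi>1 \<psi>2. gr_hom R M gM E gE \<psi>1 \<and> (\<forall>x\<in>N. \<psi>1 x = \<phi> x) \<and>
                  gr_hom R M gM E gE \<psi>2 \<and> (\<forall>x\<in>N. \<psi>2 x = \<phi> x) \<longrightarrow>
                  (\<forall>x\<in>carrier M. \<psi>1 x = \<psi>2 x)))"

definition annihilated_by :: "('a, 'm) module \<Rightarrow> 'a set \<Rightarrow> 'm set \<Rightarrow> bool" where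
  "annihilated_by E J N \<longleftrightarrow> (\<forall>j\<in>J. \<forall>x\<in>N. j \<odot>\<^bsub>E\<^esub> x = \<zero>\<^bsub>E\<^esub>)"

text \<open>Largest SG R-submodule of E annihilated by J (union of all such; this family
  is closed under sums, so the union is the largest one).\<close>
definition fshriek_set :: "('a, 'b) ring_scheme \<Rightarrow> ('a, 'm) module \<Rightarrow> (int \<Rightarrow> 'm set) \<Rightarrow> 'a set \<Rightarrow> 'm set" where
  "fshriek_set R E gE J = \<Union>{N. SG_submodule R E gE N \<and> annihilated_by E J N}"

text \<open>f^!(E) as an R/J-module: (r + J) m = r m.\<close>
definition fshriek :: "('a, 'b) ring_scheme \<Rightarrow> ('a, 'm) module \<Rightarrow> (int \<Rightarrow> 'm set) \<Rightarrow> 'a set \<Rightarrow> ('a set, 'm) module" where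
  "fshriek R E gE J =
     \<lparr> carrier = fshriek_set R E gE J, monoid.mult = monoid.mult E, one = one E,
       zero = zero E, add = add E, smult = (\<lambda>C x. (SOME r. r \<in> C) \<odot>\<^bsub>E\<^esub> x) \<rparr>"

definition fshriek_grading :: "('a, 'b) ring_scheme \<Rightarrow> ('a, 'm) module \<Rightarrow> (int \<Rightarrow> 'm set) \<Rightarrow> 'a set \<Rightarrow> int \<Rightarrow> 'm set" where
  "fshriek_grading R E gE J n = fshriek_set R E gE J \<inter> gE n"

end

theory Submission
  imports Defs
begin

text \<open>
  Restriction of scalars along the projection \<open>R \<rightarrow> R/J\<close> turns the extension problems for
  \<open>f\<^sup>!(E)\<close> in LSG-\<open>R/J\<close> into extension problems for \<open>E\<close> in LSG-\<open>R\<close>.  It makes an LSG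
  \<open>R/J\<close>-module an LSG \<open>R\<close>-module with the same SG submodules, and it preserves torsion
  quotients because the projection maps \<open>R\<^sub>\<ge>\<^sub>t\<close> into \<open>(R/J)\<^sub>\<ge>\<^sub>t\<close>.  Conversely, the
  image of a homogeneous \<open>R\<close>-homomorphism out of a module on which \<open>J\<close> acts trivially is an SG
  submodule of \<open>E\<close> annihilated by \<open>J\<close>, hence lies in \<open>f\<^sup>!(E)\<close>; so homogeneous
  \<open>R/J\<close>-homomorphisms into \<open>f\<^sup>!(E)\<close> are exactly the homogeneous \<open>R\<close>-homomorphisms into \<open>E\<close>
  out of the restricted module.  Compatibility of \<open>J\<close> gives \<open>f\<^sup>!(E)\<close> its LSG grading.
\<close>

section \<open>Graded abelian groups\<close>

definition support :: "('a, 'b) ring_scheme \<Rightarrow> (int \<Rightarrow> 'a) \<Rightarrow> int set" where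
  "support G c = {n. c n \<noteq> \<zero>\<^bsub>G\<^esub>}"

definition graded_decomposition ::
    "('a, 'b) ring_scheme \<Rightarrow> (int \<Rightarrow> 'a set) \<Rightarrow> 'a \<Rightarrow> (int \<Rightarrow> 'a) \<Rightarrow> bool" where
  "graded_decomposition G g x c \<longleftrightarrow>
     (\<forall>n. c n \<in> g n) \<and> finite (support G c) \<and> x = finsum G c (support G c)"

definition component :: "('a, 'b) ring_scheme \<Rightarrow> (int \<Rightarrow> 'a set) \<Rightarrow> 'a \<Rightarrow> int \<Rightarrow> 'a" where
  "component G g x = (THE c. graded_decomposition G g x c)"

lemma graded_sum_iff_unique_decomposition:
  "graded_sum G g \<longleftrightarrow>
     (\<forall>n. additive_subgroup (g n) G) \<and> (\<forall>x\<in>carrier G. \<exists>!c. graded_decomposition G g x c)"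
  unfolding graded_sum_def graded_decomposition_def support_def by blast

lemma (in abelian_group) finsum_support:
  assumes "finite S" "support G c \<subseteq> S" "c \<in> S \<rightarrow> carrier G"
  shows "finsum G c S = finsum G c (support G c)"
  by (rule add.finprod_mono_neutral_cong_right) (use assms in \<open>auto simp: support_def\<close>)

lemma (in abelian_group) finsum_in_additive_subgroup:
  assumes "additive_subgroup N G" "\<forall>k\<in>S. c k \<in> N"
  shows "finsum G c S \<in> N"
  using assms(2)
proof (induction S rule: infinite_finite_induct)
  case (infinite S)
  then show ?case using additive_subgroup.zero_closed[OF assms(1)] by (simp add: finsum_def finprod_def)
next
  case empty
  then show ?case using additive_subgroup.zero_closed[OF assms(1)] by simp
next
  case (insert k S)
  have "c \<in> S \<rightarrow> carrier G" "c k \<in> carrier G"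
    using insert additive_subgroup.a_subset[OF assms(1)] by auto
  then show ?case using insert additive_subgroup.a_closed[OF assms(1)] by simp
qed

locale graded_group = abelian_group G for G (structure) +
  fixes g :: "int \<Rightarrow> 'a set"
  assumes graded: "graded_sum G g"
begin

lemma homogeneous_subgroup: "additive_subgroup (g n) G"
  using graded by (simp add: graded_sum_def)

lemma homogeneous_closed: "x \<in> g n \<Longrightarrow> x \<in> carrier G"
  using additive_subgroup.a_subset[OF homogeneous_subgroup] by blast

lemma homogeneous_zero: "\<zero> \<in> g n"
  using additive_subgroup.zero_closed[OF homogeneous_subgroup] .

lemma homogeneous_add: "x \<in> g n \<Longrightarrow> y \<in> g n \<Longrightarrow> x \<oplus> y \<in> g n"
  using additive_subgroup.a_closed[OF homogeneous_subgroup] by blast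

lemma graded_decomposition_closed: "graded_decomposition G g x c \<Longrightarrow> x \<in> carrier G"
  unfolding graded_decomposition_def using homogeneous_closed by (auto intro!: finsum_closed)

lemma unique_decomposition: "x \<in> carrier G \<Longrightarrow> \<exists>!c. graded_decomposition G g x c"
  using graded by (simp add: graded_sum_iff_unique_decomposition)

lemma component_decomposition: "x \<in> carrier G \<Longrightarrow> graded_decomposition G g x (component G g x)"
  unfolding component_def using unique_decomposition by (rule theI')

lemma component_eqI:
  assumes "graded_decomposition G g x c"
  shows "component G g x = c"
proof -
  have "x \<in> carrier G" using assms by (rule graded_decomposition_closed)
  then show ?thesis using assms component_decomposition unique_decomposition by blast
qed

lemma component_homogeneous: "x \<in> carrier G \<Longrightarrow> component G g x n \<in> g n"
  using component_decomposition unfolding graded_decomposition_def by blast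

lemma component_closed: "x \<in> carrier G \<Longrightarrow> component G g x n \<in> carrier G"
  using component_homogeneous homogeneous_closed by blast

lemma finite_support_component: "x \<in> carrier G \<Longrightarrow> finite (support G (component G g x))"
  using component_decomposition unfolding graded_decomposition_def by blast

lemma finsum_component:
  assumes "x \<in> carrier G" "finite U" "support G (component G g x) \<subseteq> U"
  shows "finsum G (component G g x) U = x"
proof -
  have "finsum G (component G g x) U = finsum G (component G g x) (support G (component G g x))"
    by (rule finsum_support) (use assms component_closed in auto)
  then show ?thesis
    using component_decomposition[OF assms(1)] by (simp add: graded_decomposition_def)
qed

lemma component_finsum:
  assumes "finite S" "\<forall>k\<in>S. c k \<in> g k"
  shows "component G g (finsum G c S) n = (if n \<in> S then c n else \<zero>)"
proof -
  define d where "d k = (if k \<in> S then c k else \<zero>)" for k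
  have "support G d \<subseteq> S" by (auto simp: support_def d_def)
  have "finsum G c S = finsum G d S"
    by (rule finsum_cong') (use assms homogeneous_closed in \<open>auto simp: d_def\<close>)
  also have "\<dots> = finsum G d (support G d)"
    by (rule finsum_support) (use assms \<open>support G d \<subseteq> S\<close> homogeneous_closed in \<open>auto simp: d_def\<close>)
  finally have "graded_decomposition G g (finsum G c S) d"
    unfolding graded_decomposition_def
    using assms \<open>support G d \<subseteq> S\<close> homogeneous_zero finite_subset by (auto simp: d_def)
  then show ?thesis by (simp add: component_eqI d_def)
qed

lemma component_of_homogeneous:
  assumes "x \<in> g n"
  shows "component G g x k = (if k = n then x else \<zero>)"
  using component_finsum[of "{n}" "\<lambda>_. x" k] assms homogeneous_closed by auto

lemma homogeneous_disjoint: "x \<in> g n \<Longrightarrow> x \<in> g k \<Longrightarrow> n \<noteq> k \<Longrightarrow> x = \<zero>"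
  using component_of_homogeneous[of x n n] component_of_homogeneous[of x k n] by simp

lemma component_zero: "component G g \<zero> n = \<zero>"
  using component_finsum[of "{}"] by simp

lemma component_add:
  assumes x: "x \<in> carrier G" and y: "y \<in> carrier G"
  shows "component G g (x \<oplus> y) n = component G g x n \<oplus> component G g y n"
proof -
  let ?U = "support G (component G g x) \<union> support G (component G g y)"
  have U: "finite ?U" using finite_support_component x y by blast
  have "x \<oplus> y = finsum G (component G g x) ?U \<oplus> finsum G (component G g y) ?U"
    using finsum_component[OF x U] finsum_component[OF y U] by auto
  also have "\<dots> = finsum G (\<lambda>k. component G g x k \<oplus> component G g y k) ?U"
    by (rule finsum_addf[symmetric]) (use x y component_closed in auto)
  finally show ?thesis
    using component_finsum[OF U, of "\<lambda>k. component G g x k \<oplus> component G g y k" n]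
      component_homogeneous x y homogeneous_add
    by (auto simp: support_def)
qed

lemma component_neg:
  assumes x: "x \<in> carrier G"
  shows "component G g (\<ominus> x) n = \<ominus> component G g x n"
proof -
  have "component G g (\<ominus> x) n \<oplus> component G g x n = \<zero>"
    using component_add[of "\<ominus> x" x n] x component_zero by (simp add: l_neg)
  then show ?thesis
    using minus_equality x component_closed by simp
qed

lemma component_minus:
  "x \<in> carrier G \<Longrightarrow> y \<in> carrier G \<Longrightarrow> component G g (x \<ominus> y) n = component G g x n \<ominus> component G g y n"
  by (simp add: a_minus_def component_add component_neg)

lemma gsub_iff_components:
  "x \<in> gsub G g A \<longleftrightarrow> x \<in> carrier G \<and> (\<forall>n. n \<notin> A \<longrightarrow> component G g x n = \<zero>)"
proof
  assume "x \<in> gsub G g A"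
  then obtain c S where x: "x = finsum G c S" and S: "finite S" "S \<subseteq> A" "\<forall>k\<in>S. c k \<in> g k"
    by (auto simp: gsub_def)
  have "x \<in> carrier G"
    unfolding x by (rule finsum_closed) (use S homogeneous_closed in blast)
  moreover have "component G g x n = \<zero>" if "n \<notin> A" for n
    unfolding x using component_finsum[OF S(1,3)] S(2) that by auto
  ultimately show "x \<in> carrier G \<and> (\<forall>n. n \<notin> A \<longrightarrow> component G g x n = \<zero>)" by blast
next
  assume x: "x \<in> carrier G \<and> (\<forall>n. n \<notin> A \<longrightarrow> component G g x n = \<zero>)"
  let ?S = "support G (component G g x)"
  have "finite ?S" "?S \<subseteq> A" "\<forall>k\<in>?S. component G g x k \<in> g k" "x = finsum G (component G g x) ?S"
    using x finite_support_component component_homogeneous finsum_component[of x ?S]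
    by (auto simp: support_def)
  then show "x \<in> gsub G g A" unfolding gsub_def by blast
qed

lemma graded_subgroup_iff_component_closed:
  assumes N: "additive_subgroup N G"
  shows "N = gsub G (\<lambda>n. N \<inter> g n) UNIV \<longleftrightarrow> (\<forall>x\<in>N. \<forall>n. component G g x n \<in> N)"
proof
  assume N_eq: "N = gsub G (\<lambda>n. N \<inter> g n) UNIV"
  show "\<forall>x\<in>N. \<forall>n. component G g x n \<in> N"
  proof (intro ballI allI)
    fix x n assume "x \<in> N"
    then obtain c S where x: "x = finsum G c S" and S: "finite S" "\<forall>k\<in>S. c k \<in> N \<inter> g k"
      using N_eq unfolding gsub_def by blast
    then show "component G g x n \<in> N"
      using component_finsum[of S c n] additive_subgroup.zero_closed[OF N] by auto
  qed
next
  assume closed: "\<forall>x\<in>N. \<forall>n. component G g x n \<in> N"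
  show "N = gsub G (\<lambda>n. N \<inter> g n) UNIV"
  proof
    show "N \<subseteq> gsub G (\<lambda>n. N \<inter> g n) UNIV"
    proof
      fix x assume "x \<in> N"
      then have x: "x \<in> carrier G" using additive_subgroup.a_subset[OF N] by blast
      let ?S = "support G (component G g x)"
      have "finite ?S" "\<forall>k\<in>?S. component G g x k \<in> N \<inter> g k" "x = finsum G (component G g x) ?S"
        using finite_support_component[OF x] component_homogeneous[OF x] closed \<open>x \<in> N\<close>
          finsum_component[OF x] by auto
      then show "x \<in> gsub G (\<lambda>n. N \<inter> g n) UNIV" unfolding gsub_def by blast
    qed
    show "gsub G (\<lambda>n. N \<inter> g n) UNIV \<subseteq> N"
      unfolding gsub_def by (auto intro!: finsum_in_additive_subgroup[OF N])
  qed
qed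

end

lemma (in abelian_group_hom) hom_finsum:
  "f \<in> A \<rightarrow> carrier G \<Longrightarrow> h (finsum G f A) = finsum H (h \<circ> f) A"
  by (induction A rule: infinite_finite_induct) (auto simp: Pi_def)

lemma (in abelian_group_hom) component_hom:
  assumes "graded_sum G g" "graded_sum H gH" "\<And>n. h ` g n \<subseteq> gH n" "x \<in> carrier G"
  shows "component H gH (h x) n = h (component G g x n)"
proof -
  interpret G: graded_group G g by unfold_locales (rule assms(1))
  interpret H: graded_group H gH by unfold_locales (rule assms(2))
  let ?S = "support G (component G g x)"
  have S: "finite ?S" using G.finite_support_component[OF assms(4)] .
  have "h x = finsum H (h \<circ> component G g x) ?S"
    using hom_finsum[of "component G g x" ?S] G.finsum_component[OF assms(4) S] G.component_closed[OF assms(4)]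
    by auto
  moreover have "\<forall>k\<in>?S. (h \<circ> component G g x) k \<in> gH k"
    using assms(3) G.component_homogeneous[OF assms(4)] by auto
  ultimately show ?thesis
    using H.component_finsum[OF S, of "h \<circ> component G g x" n] by (auto simp: support_def)
qed

section \<open>Quotients by semi-graded ideals\<close>

lemma (in ring_hom_ring) ideal_prod_image:
  assumes "I \<subseteq> carrier R" "K \<subseteq> carrier R" "h ` I \<subseteq> I'" "h ` K \<subseteq> K'"
    and "s \<in> ideal_prod R I K"
  shows "s \<in> carrier R \<and> h s \<in> ideal_prod S I' K'"
  using assms(5)
proof induction
  case (prod i j)
  then have "i \<in> carrier R" "j \<in> carrier R" using assms by auto
  moreover have "h i \<in> I'" "h j \<in> K'" using prod assms by auto
  ultimately show ?case using ideal_prod.prod[of "h i" I' "h j" K' S] by simp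
next
  case (sum s1 s2)
  then show ?case by (auto intro: ideal_prod.sum)
qed

lemma (in ring_hom_ring) ideal_pow_image:
  assumes "I \<subseteq> carrier R" "h ` I \<subseteq> I'"
  shows "ideal_pow R I n \<subseteq> carrier R \<and> h ` ideal_pow R I n \<subseteq> ideal_pow S I' n"
proof (induction n)
  case 0
  show ?case using hom_closed by auto
next
  case (Suc n)
  show ?case
    using ideal_prod_image[OF assms(1) Suc.IH[THEN conjunct1] assms(2) Suc.IH[THEN conjunct2]] by auto
qed

locale SG_quotient = ring R for R (structure) +
  fixes g :: "int \<Rightarrow> 'a set" and J :: "'a set"
  assumes SG_ring: "SG_ring R g" and SG_ideal: "SG_ideal R g J"
begin

sublocale R: graded_group R g
  using SG_ring by unfold_locales (simp add: SG_ring_def)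

lemma ideal_J: "ideal J R"
  using SG_ideal by (simp add: SG_ideal_def)

sublocale quot: ring_hom_ring R "R Quot J" "(+>) J"
  using ideal_J by (rule ideal.rcos_ring_hom_ring)

lemma quotient_ring: "ring (R Quot J)"
  using ideal.quotient_is_ring[OF ideal_J] .

lemma J_subset: "J \<subseteq> carrier R"
  using ideal.Icarr[OF ideal_J] by blast

lemma carrier_quotient: "carrier (R Quot J) = (+>) J ` carrier R"
  unfolding FactRing_def A_RCOSETS_def'[of R J] by auto

lemma zero_quotient: "\<zero>\<^bsub>R Quot J\<^esub> = J"
  unfolding FactRing_def by simp

lemma rcos_eq_iff: "a \<in> carrier R \<Longrightarrow> b \<in> carrier R \<Longrightarrow> J +> a = J +> b \<longleftrightarrow> a \<ominus> b \<in> J"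
  using quotient_eq_iff_same_a_r_cos[OF ideal_J] by blast

lemma rcos_eq_J_iff: "a \<in> carrier R \<Longrightarrow> J +> a = J \<longleftrightarrow> a \<in> J"
  using rcos_eq_iff[of a \<zero>] zero_quotient by (simp add: a_minus_def)

lemma quot_grading_eq: "quot_grading R g J n = (+>) J ` g n"
  unfolding quot_grading_def by auto

lemma component_in_J: "a \<in> J \<Longrightarrow> component R g a n \<in> J"
  using R.graded_subgroup_iff_component_closed[OF ideal.axioms(1)[OF ideal_J]] SG_ideal
  by (simp add: SG_ideal_def)

lemma rcos_decomposition:
  assumes a: "a \<in> carrier R"
  shows "graded_decomposition (R Quot J) (quot_grading R g J) (J +> a) (\<lambda>n. J +> component R g a n)"
proof -
  let ?S = "support R (component R g a)" and ?c = "\<lambda>n. J +> component R g a n"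
  have S: "finite ?S" using R.finite_support_component[OF a] .
  have c_support: "support (R Quot J) ?c \<subseteq> ?S"
    by (auto simp: support_def zero_quotient)
  have "J +> a = finsum (R Quot J) ?c ?S"
    using quot.hom_finsum[of "component R g a" ?S] R.finsum_component[OF a S] R.component_closed[OF a]
    by (auto simp: comp_def)
  also have "\<dots> = finsum (R Quot J) ?c (support (R Quot J) ?c)"
    by (rule abelian_group.finsum_support[OF ring.is_abelian_group[OF quotient_ring] S c_support])
       (use R.component_closed[OF a] in auto)
  finally show ?thesis
    unfolding graded_decomposition_def quot_grading_eq
    using finite_subset[OF c_support S] R.component_homogeneous[OF a] by auto
qed

lemma rcos_decomposition_unique:
  assumes a: "a \<in> carrier R"
    and d: "graded_decomposition (R Quot J) (quot_grading R g J) (J +> a) d"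
  shows "d n = J +> component R g a n"
proof -
  let ?T = "support (R Quot J) d"
  have T: "finite ?T" and a_sum: "J +> a = finsum (R Quot J) d ?T"
    and d_hom: "\<And>n. d n \<in> (+>) J ` g n"
    using d unfolding graded_decomposition_def quot_grading_eq by blast+
  have "\<forall>n. \<exists>s. s \<in> g n \<and> J +> s = d n" using d_hom by blast
  then obtain s where "\<forall>n. s n \<in> g n \<and> J +> s n = d n" by (rule choice[THEN exE])
  then have s: "\<And>n. s n \<in> g n" "\<And>n. J +> s n = d n" by auto
  have s_closed: "s \<in> ?T \<rightarrow> carrier R" using s(1) R.homogeneous_closed by blast
  have sum_closed: "finsum R s ?T \<in> carrier R" using s_closed by (rule finsum_closed)
  have "J +> finsum R s ?T = J +> a"
    using quot.hom_finsum[OF s_closed] a_sum s(2) by (simp add: comp_def)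
  then have "finsum R s ?T \<ominus> a \<in> J" using rcos_eq_iff[OF sum_closed a] by simp
  then have "component R g (finsum R s ?T \<ominus> a) n \<in> J" by (rule component_in_J)
  then have "component R g (finsum R s ?T) n \<ominus> component R g a n \<in> J"
    using R.component_minus[OF sum_closed a] by simp
  then have "J +> component R g (finsum R s ?T) n = J +> component R g a n"
    using rcos_eq_iff R.component_closed sum_closed a by simp
  moreover have "J +> component R g (finsum R s ?T) n = d n"
  proof (cases "n \<in> ?T")
    case True
    then show ?thesis using R.component_finsum[OF T, of s n] s by simp
  next
    case False
    then have "d n = J" by (simp add: support_def zero_quotient)
    moreover have "component R g (finsum R s ?T) n = \<zero>"
      using R.component_finsum[OF T, of s n] s False by simp
    ultimately show ?thesis using zero_quotient by simp
  qed
  ultimately show ?thesis by simp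
qed

lemma graded_sum_quotient: "graded_sum (R Quot J) (quot_grading R g J)"
  unfolding graded_sum_iff_unique_decomposition
proof (intro conjI allI ballI)
  fix n
  have "subgroup (g n) (add_monoid R)"
    using R.homogeneous_subgroup by (rule additive_subgroup.a_subgroup)
  then show "additive_subgroup (quot_grading R g J n) (R Quot J)"
    unfolding quot_grading_eq by (intro additive_subgroupI quot.img_is_add_subgroup)
next
  fix X assume "X \<in> carrier (R Quot J)"
  then obtain a where a: "a \<in> carrier R" and X: "X = J +> a" using carrier_quotient by auto
  show "\<exists>!c. graded_decomposition (R Quot J) (quot_grading R g J) X c"
    unfolding X
  proof (rule ex1I)
    show "graded_decomposition (R Quot J) (quot_grading R g J) (J +> a) (\<lambda>n. J +> component R g a n)"
      using a by (rule rcos_decomposition)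
  qed (use rcos_decomposition_unique[OF a] in auto)
qed

sublocale Q: graded_group "R Quot J" "quot_grading R g J"
  by (rule graded_group.intro[OF ring.is_abelian_group[OF quotient_ring]])
     (unfold_locales, rule graded_sum_quotient)

lemma component_rcos:
  "a \<in> carrier R \<Longrightarrow> component (R Quot J) (quot_grading R g J) (J +> a) n = J +> component R g a n"
  using Q.component_eqI[OF rcos_decomposition] by simp

lemma rcos_gsub: "a \<in> gsub R g A \<Longrightarrow> J +> a \<in> gsub (R Quot J) (quot_grading R g J) A"
  using R.gsub_iff_components[of a A] Q.gsub_iff_components[of "J +> a" A] component_rcos[of a]
  by (simp add: zero_quotient)

lemma SG_ring_quotient: "SG_ring (R Quot J) (quot_grading R g J)"
  unfolding SG_ring_def
proof (intro conjI allI ballI)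
  show "ring (R Quot J)" by (rule quotient_ring)
  show "graded_sum (R Quot J) (quot_grading R g J)" by (rule graded_sum_quotient)
  show "\<one>\<^bsub>R Quot J\<^esub> \<in> quot_grading R g J 0"
    using SG_ring quot.hom_one unfolding quot_grading_eq SG_ring_def by (metis image_eqI one_closed)
next
  fix m n X Y assume "X \<in> quot_grading R g J m" "Y \<in> quot_grading R g J n"
  then obtain a b where ab: "a \<in> g m" "b \<in> g n" and XY: "X = J +> a" "Y = J +> b"
    by (auto simp: quot_grading_eq)
  then have "a \<otimes> b \<in> gsub R g {..m + n}" using SG_ring by (simp add: SG_ring_def)
  moreover have "J +> (a \<otimes> b) = X \<otimes>\<^bsub>R Quot J\<^esub> Y"
    using ab XY R.homogeneous_closed by simp
  ultimately show "X \<otimes>\<^bsub>R Quot J\<^esub> Y \<in> gsub (R Quot J) (quot_grading R g J) {..m + n}"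
    using rcos_gsub by metis
qed

lemma SG_ideal_carrier: "SG_ideal R g (carrier R)"
  unfolding SG_ideal_def
  using R.graded_subgroup_iff_component_closed[OF ideal.axioms(1)[OF oneideal]] R.component_closed
  by (simp add: oneideal)

lemma SG_ideal_vimage:
  assumes K: "SG_ideal (R Quot J) (quot_grading R g J) K"
  shows "SG_ideal R g {a \<in> carrier R. J +> a \<in> K}"
proof -
  have K_ideal: "ideal K (R Quot J)" using K by (simp add: SG_ideal_def)
  have vimage_ideal: "ideal {a \<in> carrier R. J +> a \<in> K} R" by (rule quot.ideal_vimage[OF K_ideal])
  have K_closed: "\<forall>X\<in>K. \<forall>n. component (R Quot J) (quot_grading R g J) X n \<in> K"
    using Q.graded_subgroup_iff_component_closed[OF ideal.axioms(1)[OF K_ideal]] K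
    by (simp add: SG_ideal_def)
  have "\<forall>a\<in>{a \<in> carrier R. J +> a \<in> K}. \<forall>n. component R g a n \<in> {a \<in> carrier R. J +> a \<in> K}"
    using K_closed component_rcos R.component_closed by auto
  then show ?thesis
    using R.graded_subgroup_iff_component_closed[OF ideal.axioms(1)[OF vimage_ideal]] vimage_ideal
    by (simp add: SG_ideal_def)
qed

lemma R_ge_subset_carrier: "R_ge R g t \<subseteq> carrier R"
  unfolding R_ge_def using SG_ideal_carrier R.gsub_iff_components by blast

lemma rcos_R_ge: "(+>) J ` R_ge R g t \<subseteq> R_ge (R Quot J) (quot_grading R g J) t"
proof (unfold R_ge_def, intro image_subsetI InterI)
  fix a K
  assume a: "a \<in> \<Inter> {I. SG_ideal R g I \<and> gsub R g {t..} \<subseteq> I}"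
    and "K \<in> {K. SG_ideal (R Quot J) (quot_grading R g J) K \<and>
                 gsub (R Quot J) (quot_grading R g J) {t..} \<subseteq> K}"
  then have K: "SG_ideal (R Quot J) (quot_grading R g J) K"
    and K_ge: "gsub (R Quot J) (quot_grading R g J) {t..} \<subseteq> K" by auto
  have "gsub R g {t..} \<subseteq> {a \<in> carrier R. J +> a \<in> K}"
    using rcos_gsub K_ge R.gsub_iff_components by blast
  then show "J +> a \<in> K" using a SG_ideal_vimage[OF K] by blast
qed

lemma rcos_ideal_pow_R_ge:
  "a \<in> ideal_pow R (R_ge R g t) n \<Longrightarrow>
     J +> a \<in> ideal_pow (R Quot J) (R_ge (R Quot J) (quot_grading R g J) t) n"
  using quot.ideal_pow_image[OF R_ge_subset_carrier rcos_R_ge] by blast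

end

section \<open>Left modules\<close>

locale left_module =
  fixes R :: "('a, 'b) ring_scheme" and M :: "('a, 'm) module"
  assumes lmodule: "lmodule R M"
begin

sublocale R: ring R
  using lmodule by (simp add: lmodule_def)

sublocale M: abelian_group M
  using lmodule by (simp add: lmodule_def)

lemma smult_closed: "a \<in> carrier R \<Longrightarrow> x \<in> carrier M \<Longrightarrow> a \<odot>\<^bsub>M\<^esub> x \<in> carrier M"
  using lmodule by (simp add: lmodule_def)

lemma smult_l_distr:
  "a \<in> carrier R \<Longrightarrow> b \<in> carrier R \<Longrightarrow> x \<in> carrier M \<Longrightarrow>
     (a \<oplus>\<^bsub>R\<^esub> b) \<odot>\<^bsub>M\<^esub> x = a \<odot>\<^bsub>M\<^esub> x \<oplus>\<^bsub>M\<^esub> b \<odot>\<^bsub>M\<^esub> x"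
  using lmodule by (simp add: lmodule_def)

lemma smult_r_distr:
  "a \<in> carrier R \<Longrightarrow> x \<in> carrier M \<Longrightarrow> y \<in> carrier M \<Longrightarrow>
     a \<odot>\<^bsub>M\<^esub> (x \<oplus>\<^bsub>M\<^esub> y) = a \<odot>\<^bsub>M\<^esub> x \<oplus>\<^bsub>M\<^esub> a \<odot>\<^bsub>M\<^esub> y"
  using lmodule by (simp add: lmodule_def)

lemma smult_assoc1:
  "a \<in> carrier R \<Longrightarrow> b \<in> carrier R \<Longrightarrow> x \<in> carrier M \<Longrightarrow>
     (a \<otimes>\<^bsub>R\<^esub> b) \<odot>\<^bsub>M\<^esub> x = a \<odot>\<^bsub>M\<^esub> (b \<odot>\<^bsub>M\<^esub> x)"
  using lmodule by (simp add: lmodule_def)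

lemma smult_one: "x \<in> carrier M \<Longrightarrow> \<one>\<^bsub>R\<^esub> \<odot>\<^bsub>M\<^esub> x = x"
  using lmodule by (simp add: lmodule_def)

lemma smult_l_null: "x \<in> carrier M \<Longrightarrow> \<zero>\<^bsub>R\<^esub> \<odot>\<^bsub>M\<^esub> x = \<zero>\<^bsub>M\<^esub>"
  using smult_l_distr[of "\<zero>\<^bsub>R\<^esub>" "\<zero>\<^bsub>R\<^esub>" x] smult_closed[of "\<zero>\<^bsub>R\<^esub>" x]
  by (simp add: M.add.l_cancel_one' M.r_zero)

lemma smult_r_null: "a \<in> carrier R \<Longrightarrow> a \<odot>\<^bsub>M\<^esub> \<zero>\<^bsub>M\<^esub> = \<zero>\<^bsub>M\<^esub>"
  using smult_r_distr[of a "\<zero>\<^bsub>M\<^esub>" "\<zero>\<^bsub>M\<^esub>"] smult_closed[of a "\<zero>\<^bsub>M\<^esub>"]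
  by (simp add: M.add.l_cancel_one')

lemma smult_minus_one: "x \<in> carrier M \<Longrightarrow> (\<ominus>\<^bsub>R\<^esub> \<one>\<^bsub>R\<^esub>) \<odot>\<^bsub>M\<^esub> x = \<ominus>\<^bsub>M\<^esub> x"
  using smult_l_distr[of "\<ominus>\<^bsub>R\<^esub> \<one>\<^bsub>R\<^esub>" "\<one>\<^bsub>R\<^esub>" x] smult_closed[of "\<ominus>\<^bsub>R\<^esub> \<one>\<^bsub>R\<^esub>" x]
  by (simp add: smult_one smult_l_null M.minus_equality R.l_neg)

lemma submodule_set_add:
  assumes N1: "submodule_set R M N1" and N2: "submodule_set R M N2"
  shows "submodule_set R M (N1 <+>\<^bsub>M\<^esub> N2)"
  unfolding submodule_set_def
proof (intro conjI ballI)
  have carr: "N1 \<subseteq> carrier M" "N2 \<subseteq> carrier M" using N1 N2 by (auto simp: submodule_set_def)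
  then show "N1 <+>\<^bsub>M\<^esub> N2 \<subseteq> carrier M" by (auto simp: set_add_def' intro!: M.a_closed)
  have "\<zero>\<^bsub>M\<^esub> = \<zero>\<^bsub>M\<^esub> \<oplus>\<^bsub>M\<^esub> \<zero>\<^bsub>M\<^esub>" "\<zero>\<^bsub>M\<^esub> \<in> N1" "\<zero>\<^bsub>M\<^esub> \<in> N2"
    using N1 N2 by (auto simp: submodule_set_def)
  then show "\<zero>\<^bsub>M\<^esub> \<in> N1 <+>\<^bsub>M\<^esub> N2" unfolding set_add_def' by blast
next
  fix u v assume "u \<in> N1 <+>\<^bsub>M\<^esub> N2" "v \<in> N1 <+>\<^bsub>M\<^esub> N2"
  then obtain x y x' y' where xy: "x \<in> N1" "y \<in> N2" "x' \<in> N1" "y' \<in> N2"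
    and uv: "u = x \<oplus>\<^bsub>M\<^esub> y" "v = x' \<oplus>\<^bsub>M\<^esub> y'" unfolding set_add_def' by blast
  have "u \<oplus>\<^bsub>M\<^esub> v = (x \<oplus>\<^bsub>M\<^esub> x') \<oplus>\<^bsub>M\<^esub> (y \<oplus>\<^bsub>M\<^esub> y')"
    unfolding uv using xy N1 N2 by (simp add: submodule_set_def subset_iff M.a_ac)
  moreover have "x \<oplus>\<^bsub>M\<^esub> x' \<in> N1" "y \<oplus>\<^bsub>M\<^esub> y' \<in> N2"
    using xy N1 N2 unfolding submodule_set_def by blast+
  ultimately show "u \<oplus>\<^bsub>M\<^esub> v \<in> N1 <+>\<^bsub>M\<^esub> N2" unfolding set_add_def' by blast
next
  fix a u assume a: "a \<in> carrier R" and "u \<in> N1 <+>\<^bsub>M\<^esub> N2"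
  then obtain x y where xy: "x \<in> N1" "y \<in> N2" and u: "u = x \<oplus>\<^bsub>M\<^esub> y"
    unfolding set_add_def' by blast
  have "x \<in> carrier M" "y \<in> carrier M" using xy N1 N2 unfolding submodule_set_def by blast+
  then have "a \<odot>\<^bsub>M\<^esub> u = a \<odot>\<^bsub>M\<^esub> x \<oplus>\<^bsub>M\<^esub> a \<odot>\<^bsub>M\<^esub> y"
    unfolding u by (rule smult_r_distr[OF a])
  moreover have "a \<odot>\<^bsub>M\<^esub> x \<in> N1" "a \<odot>\<^bsub>M\<^esub> y \<in> N2"
    using a xy N1 N2 unfolding submodule_set_def by blast+
  ultimately show "a \<odot>\<^bsub>M\<^esub> u \<in> N1 <+>\<^bsub>M\<^esub> N2" unfolding set_add_def' by blast
qed

lemma submodule_additive_subgroup: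
  assumes "submodule_set R M N"
  shows "additive_subgroup N M"
proof (intro additive_subgroupI M.a_group[THEN group.subgroupI])
  fix x assume "x \<in> N"
  moreover have "\<ominus>\<^bsub>R\<^esub> \<one>\<^bsub>R\<^esub> \<in> carrier R" by simp
  ultimately have "(\<ominus>\<^bsub>R\<^esub> \<one>\<^bsub>R\<^esub>) \<odot>\<^bsub>M\<^esub> x \<in> N" "x \<in> carrier M"
    using assms by (auto simp: submodule_set_def)
  then show "inv\<^bsub>add_monoid M\<^esub> x \<in> N"
    using smult_minus_one by (simp add: a_inv_def[symmetric])
qed (use assms in \<open>auto simp: submodule_set_def\<close>)

end

lemma (in left_module) annihilated_by_set_add:
  assumes "J \<subseteq> carrier R" "N1 \<subseteq> carrier M" "N2 \<subseteq> carrier M"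
    and "annihilated_by M J N1" "annihilated_by M J N2"
  shows "annihilated_by M J (N1 <+>\<^bsub>M\<^esub> N2)"
  unfolding annihilated_by_def set_add_def'
proof (intro ballI)
  fix j z assume j: "j \<in> J" and "z \<in> (\<Union>x\<in>N1. \<Union>y\<in>N2. {x \<oplus>\<^bsub>M\<^esub> y})"
  then obtain x y where "x \<in> N1" "y \<in> N2" "z = x \<oplus>\<^bsub>M\<^esub> y" by blast
  then show "j \<odot>\<^bsub>M\<^esub> z = \<zero>\<^bsub>M\<^esub>"
    using assms j smult_r_distr[of j x y] by (auto simp: annihilated_by_def)
qed

lemma gr_hom_abelian_group_hom:
  assumes "abelian_group M" "abelian_group E" "gr_hom R M gM E gE h"
  shows "abelian_group_hom M E h"
  using assms
  by (intro abelian_group_homI group_hom.intro group_hom_axioms.intro homI abelian_group.a_group)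
     (auto simp: gr_hom_def)

locale graded_module = left_module R M + M: graded_group M gM
  for R :: "('a, 'b) ring_scheme" and M :: "('a, 'm) module" and gM
begin

lemma SG_submodule_iff_component_closed:
  "submodule_set R M N \<Longrightarrow> SG_submodule R M gM N \<longleftrightarrow> (\<forall>x\<in>N. \<forall>n. component M gM x n \<in> N)"
  using M.graded_subgroup_iff_component_closed[OF submodule_additive_subgroup]
  by (simp add: SG_submodule_def)

lemma SG_submodule_set_add:
  assumes N1: "SG_submodule R M gM N1" and N2: "SG_submodule R M gM N2"
  shows "SG_submodule R M gM (N1 <+>\<^bsub>M\<^esub> N2)"
proof -
  have sub: "submodule_set R M N1" "submodule_set R M N2"
    using N1 N2 by (auto simp: SG_submodule_def)
  have "component M gM u n \<in> N1 <+>\<^bsub>M\<^esub> N2" if u: "u \<in> N1 <+>\<^bsub>M\<^esub> N2" for u n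
  proof -
    obtain x y where xy: "x \<in> N1" "y \<in> N2" and u_eq: "u = x \<oplus>\<^bsub>M\<^esub> y"
      using u by (auto simp: set_add_def')
    have "x \<in> carrier M" "y \<in> carrier M" using xy sub unfolding submodule_set_def by blast+
    then have "component M gM u n = component M gM x n \<oplus>\<^bsub>M\<^esub> component M gM y n"
      unfolding u_eq by (rule M.component_add)
    moreover have "component M gM x n \<in> N1" "component M gM y n \<in> N2"
      using xy N1 N2 sub SG_submodule_iff_component_closed by blast+
    ultimately show ?thesis by (auto simp: set_add_def')
  qed
  then show ?thesis
    using SG_submodule_iff_component_closed[OF submodule_set_add[OF sub]] by blast
qed

lemma SG_submodule_image:
  fixes N :: "('a, 'n) module"
  assumes lmodule_N: "lmodule R N" and graded_N: "graded_sum N gN"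
    and \<psi>: "gr_hom R N gN M gM \<psi>"
  shows "SG_submodule R M gM (\<psi> ` carrier N)"
proof -
  interpret N: graded_module R N gN
    using lmodule_N graded_N
    by (intro graded_module.intro left_module.intro graded_group.intro graded_group_axioms.intro)
       (auto simp: lmodule_def)
  interpret \<psi>: abelian_group_hom N M \<psi>
    using N.M.abelian_group_axioms M.abelian_group_axioms \<psi> by (rule gr_hom_abelian_group_hom)
  have submodule: "submodule_set R M (\<psi> ` carrier N)"
    unfolding submodule_set_def
  proof (intro conjI ballI)
    show "\<psi> ` carrier N \<subseteq> carrier M" using \<psi>.hom_closed by blast
    show "\<zero>\<^bsub>M\<^esub> \<in> \<psi> ` carrier N" using \<psi>.hom_zero N.M.zero_closed by (metis image_eqI)
  next
    fix u v assume "u \<in> \<psi> ` carrier N" "v \<in> \<psi> ` carrier N"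
    then obtain x y where "x \<in> carrier N" "y \<in> carrier N" "u = \<psi> x" "v = \<psi> y" by blast
    then have "u \<oplus>\<^bsub>M\<^esub> v = \<psi> (x \<oplus>\<^bsub>N\<^esub> y)" "x \<oplus>\<^bsub>N\<^esub> y \<in> carrier N" by simp_all
    then show "u \<oplus>\<^bsub>M\<^esub> v \<in> \<psi> ` carrier N" by blast
  next
    fix a u assume a: "a \<in> carrier R" and "u \<in> \<psi> ` carrier N"
    then obtain x where x: "x \<in> carrier N" and u: "u = \<psi> x" by blast
    have "a \<odot>\<^bsub>M\<^esub> u = \<psi> (a \<odot>\<^bsub>N\<^esub> x)" using \<psi> a x u by (simp add: gr_hom_def)
    then show "a \<odot>\<^bsub>M\<^esub> u \<in> \<psi> ` carrier N" using N.smult_closed[OF a x] by blast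
  qed
  have "component M gM u n \<in> \<psi> ` carrier N" if u_image: "u \<in> \<psi> ` carrier N" for u n
  proof -
    obtain x where x: "x \<in> carrier N" and u: "u = \<psi> x" using u_image by blast
    have "\<psi> ` gN k \<subseteq> gM k" for k using \<psi> by (simp add: gr_hom_def)
    then have "component M gM u n = \<psi> (component N gN x n)"
      unfolding u using x by (rule \<psi>.component_hom[OF graded_N M.graded])
    then show ?thesis using N.M.component_closed[OF x] by blast
  qed
  then show ?thesis using SG_submodule_iff_component_closed[OF submodule] by blast
qed

end

section \<open>Restriction of scalars\<close>

definition restrict_scalars :: "('a \<Rightarrow> 'c) \<Rightarrow> ('c, 'm) module \<Rightarrow> ('a, 'm) module" where
  "restrict_scalars h M = \<lparr>carrier = carrier M, monoid.mult = monoid.mult M, one = one M,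
     zero = zero M, add = add M, smult = (\<lambda>a x. h a \<odot>\<^bsub>M\<^esub> x)\<rparr>"

lemma restrict_scalars_simps [simp]:
  "carrier (restrict_scalars h M) = carrier M" "add (restrict_scalars h M) = add M"
  "zero (restrict_scalars h M) = zero M" "smult (restrict_scalars h M) a x = h a \<odot>\<^bsub>M\<^esub> x"
  by (simp_all add: restrict_scalars_def)

lemma restrict_scalars_carrier_update:
  "restrict_scalars h (M\<lparr>carrier := N\<rparr>) = (restrict_scalars h M)\<lparr>carrier := N\<rparr>"
  by (simp add: restrict_scalars_def)

lemma finsum_restrict_scalars: "finsum (restrict_scalars h M) = finsum M"
  by (simp add: fun_eq_iff finsum_def finprod_def restrict_scalars_def)

lemma gsub_restrict_scalars: "gsub (restrict_scalars h M) = gsub M"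
  by (simp add: fun_eq_iff gsub_def finsum_restrict_scalars)

lemma additive_subgroup_restrict_scalars:
  "additive_subgroup N (restrict_scalars h M) \<longleftrightarrow> additive_subgroup N M"
  by (simp add: additive_subgroup_def subgroup_def m_inv_def restrict_scalars_def)

lemma graded_sum_restrict_scalars: "graded_sum (restrict_scalars h M) g \<longleftrightarrow> graded_sum M g"
  by (simp add: graded_sum_def additive_subgroup_restrict_scalars finsum_restrict_scalars)

lemma abelian_group_restrict_scalars:
  assumes "abelian_group M"
  shows "abelian_group (restrict_scalars h M)"
proof -
  interpret M: abelian_group M by fact
  show ?thesis
  proof (rule abelian_groupI)
    fix x assume "x \<in> carrier (restrict_scalars h M)"
    then show "\<exists>y\<in>carrier (restrict_scalars h M). y \<oplus>\<^bsub>restrict_scalars h M\<^esub> x = \<zero>\<^bsub>restrict_scalars h M\<^esub>"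
      using M.l_neg M.a_inv_closed by auto
  qed (auto simp: M.a_ac)
qed

lemma lmodule_restrict_scalars:
  assumes h: "ring_hom_ring R S h" and M: "lmodule S M"
  shows "lmodule R (restrict_scalars h M)"
proof -
  interpret h: ring_hom_ring R S h by fact
  interpret M: left_module S M by unfold_locales fact
  show ?thesis
    unfolding lmodule_def
    by (simp add: h.R.ring_axioms abelian_group_restrict_scalars M.M.abelian_group_axioms
        M.smult_closed M.smult_l_distr M.smult_r_distr M.smult_assoc1 M.smult_one)
qed

lemma submodule_set_restrict_scalars:
  "h \<in> carrier R \<rightarrow> carrier S \<Longrightarrow> submodule_set S M N \<Longrightarrow> submodule_set R (restrict_scalars h M) N"
  by (auto simp: submodule_set_def)

context SG_quotient
begin

lemma rcos_Rp_n:
  assumes a: "a \<in> Rp_n R g n"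
  shows "J +> a \<in> Rp_n (R Quot J) (quot_grading R g J) n"
proof -
  have "(J +> a) \<otimes>\<^bsub>R Quot J\<^esub> (J +> b) \<in> (+>) J ` g (n + m)" if "b \<in> g m" for b m
  proof -
    have "a \<in> carrier R" "b \<in> carrier R"
      using a that R.homogeneous_closed by (auto simp: Rp_n_def)
    then have "(J +> a) \<otimes>\<^bsub>R Quot J\<^esub> (J +> b) = J +> (a \<otimes> b)" by simp
    moreover have "a \<otimes> b \<in> g (n + m)" using a that by (simp add: Rp_n_def)
    ultimately show ?thesis by simp
  qed
  then show ?thesis using a unfolding Rp_n_def quot_grading_eq by blast
qed

lemma LSG_restrict_scalars:
  assumes M: "LSG_module (R Quot J) (quot_grading R g J) M gM"
  shows "LSG_module R g (restrict_scalars ((+>) J) M) gM"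
proof -
  have lmodule: "lmodule (R Quot J) M" and graded: "graded_sum M gM"
    and bounded: "\<And>m n X x. 0 \<le> m \<Longrightarrow> X \<in> quot_grading R g J m \<Longrightarrow> x \<in> gM n \<Longrightarrow>
                    X \<odot>\<^bsub>M\<^esub> x \<in> gsub M gM {..m + n}"
    and left: "\<And>n m X x. X \<in> Rp_n (R Quot J) (quot_grading R g J) n \<Longrightarrow> x \<in> gM m \<Longrightarrow>
                 X \<odot>\<^bsub>M\<^esub> x \<in> gM (n + m)"
    using M unfolding LSG_module_def SG_module_def by blast+
  have "J +> a \<in> quot_grading R g J m" if "a \<in> g m" for a m
    using that by (simp add: quot_grading_eq)
  then show ?thesis
    unfolding LSG_module_def SG_module_def
    using SG_ring lmodule_restrict_scalars[OF quot.ring_hom_ring_axioms lmodule] graded bounded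
      left[OF rcos_Rp_n]
    by (simp add: graded_sum_restrict_scalars gsub_restrict_scalars)
qed

lemma SG_submodule_restrict_scalars:
  assumes "SG_submodule (R Quot J) M gM N"
  shows "SG_submodule R (restrict_scalars ((+>) J) M) gM N"
proof -
  have "(+>) J \<in> carrier R \<rightarrow> carrier (R Quot J)" using quot.hom_closed by blast
  from submodule_set_restrict_scalars[OF this] show ?thesis
    using assms by (auto simp: SG_submodule_def gsub_restrict_scalars)
qed

lemma quotient_torsion_restrict_scalars:
  "quotient_torsion (R Quot J) (quot_grading R g J) M N \<Longrightarrow>
     quotient_torsion R g (restrict_scalars ((+>) J) M) N"
  unfolding quotient_torsion_def by (simp, metis rcos_ideal_pow_R_ge)

end

section \<open>The module \<open>f\<^sup>!(E)\<close>\<close>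

locale fshriek_setting =
  fixes R :: "('a, 'b) ring_scheme" (structure) and g :: "int \<Rightarrow> 'a set"
    and E :: "('a, 'e) module" and gE :: "int \<Rightarrow> 'e set" and J :: "'a set"
  assumes LSG_E: "LSG_module R g E gE" and SG_ideal_J: "SG_ideal R g J"
begin

lemma SG_module_E: "SG_module R g E gE"
  using LSG_E by (simp add: LSG_module_def)

sublocale SG_quotient R g J
  using SG_module_E SG_ideal_J
  by (intro SG_quotient.intro SG_quotient_axioms.intro) (auto simp: SG_module_def SG_ring_def)

sublocale E: graded_module R E gE
  using SG_module_E by (intro graded_module.intro left_module.intro graded_group.intro
      graded_group_axioms.intro) (auto simp: SG_module_def lmodule_def)

abbreviation "F \<equiv> fshriek R E gE J"
abbreviation "gF \<equiv> fshriek_grading R E gE J"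

lemma fshriek_simps [simp]:
  "carrier F = fshriek_set R E gE J" "add F = add E" "zero F = zero E"
  by (simp_all add: fshriek_def)

lemma gF_eq: "gF n = carrier F \<inter> gE n"
  by (simp add: fshriek_grading_def)

lemma fshriek_set_greatest:
  "SG_submodule R E gE N \<Longrightarrow> annihilated_by E J N \<Longrightarrow> N \<subseteq> fshriek_set R E gE J"
  unfolding fshriek_set_def by blast

lemma fshriek_setE:
  assumes "x \<in> fshriek_set R E gE J"
  obtains N where "SG_submodule R E gE N" "annihilated_by E J N" "x \<in> N"
  using assms unfolding fshriek_set_def by blast

lemma fshriek_set_add:
  assumes "x \<in> fshriek_set R E gE J" "y \<in> fshriek_set R E gE J"
  shows "x \<oplus>\<^bsub>E\<^esub> y \<in> fshriek_set R E gE J"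
proof -
  obtain N1 where N1: "SG_submodule R E gE N1" "annihilated_by E J N1" "x \<in> N1"
    using assms(1) by (rule fshriek_setE)
  obtain N2 where N2: "SG_submodule R E gE N2" "annihilated_by E J N2" "y \<in> N2"
    using assms(2) by (rule fshriek_setE)
  have carr: "N1 \<subseteq> carrier E" "N2 \<subseteq> carrier E"
    using N1 N2 by (auto simp: SG_submodule_def submodule_set_def)
  have "x \<oplus>\<^bsub>E\<^esub> y \<in> N1 <+>\<^bsub>E\<^esub> N2" using N1 N2 by (auto simp: set_add_def')
  moreover have "N1 <+>\<^bsub>E\<^esub> N2 \<subseteq> fshriek_set R E gE J"
    using E.SG_submodule_set_add[OF N1(1) N2(1)] E.annihilated_by_set_add[OF J_subset carr N1(2) N2(2)]
    by (rule fshriek_set_greatest)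
  ultimately show ?thesis by blast
qed

lemma SG_submodule_zero: "SG_submodule R E gE {\<zero>\<^bsub>E\<^esub>}"
  using E.SG_submodule_iff_component_closed[of "{\<zero>\<^bsub>E\<^esub>}"]
  by (simp add: submodule_set_def E.smult_r_null E.M.component_zero)

lemma SG_submodule_fshriek_set: "SG_submodule R E gE (fshriek_set R E gE J)"
proof -
  have "annihilated_by E J {\<zero>\<^bsub>E\<^esub>}"
    unfolding annihilated_by_def using J_subset E.smult_r_null by blast
  then have "\<zero>\<^bsub>E\<^esub> \<in> fshriek_set R E gE J"
    using fshriek_set_greatest[OF SG_submodule_zero] by blast
  moreover have "a \<odot>\<^bsub>E\<^esub> x \<in> fshriek_set R E gE J"
    if a: "a \<in> carrier R" and x: "x \<in> fshriek_set R E gE J" for a x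
  proof -
    obtain N where N: "SG_submodule R E gE N" "annihilated_by E J N" "x \<in> N"
      using x by (rule fshriek_setE)
    then have "a \<odot>\<^bsub>E\<^esub> x \<in> N" using a by (auto simp: SG_submodule_def submodule_set_def)
    then show ?thesis using fshriek_set_greatest[OF N(1,2)] by blast
  qed
  moreover have "component E gE x n \<in> fshriek_set R E gE J"
    if x: "x \<in> fshriek_set R E gE J" for x n
  proof -
    obtain N where N: "SG_submodule R E gE N" "annihilated_by E J N" "x \<in> N"
      using x by (rule fshriek_setE)
    then have "component E gE x n \<in> N"
      using E.SG_submodule_iff_component_closed by (auto simp: SG_submodule_def)
    then show ?thesis using fshriek_set_greatest[OF N(1,2)] by blast
  qed
  moreover have "fshriek_set R E gE J \<subseteq> carrier E"
    unfolding fshriek_set_def by (auto simp: SG_submodule_def submodule_set_def)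
  ultimately show ?thesis
    using E.SG_submodule_iff_component_closed fshriek_set_add by (simp add: submodule_set_def)
qed

lemma fshriek_subgroup: "additive_subgroup (carrier F) E"
  using SG_submodule_fshriek_set E.submodule_additive_subgroup by (simp add: SG_submodule_def)

lemma fshriek_closed: "x \<in> carrier F \<Longrightarrow> x \<in> carrier E"
  using additive_subgroup.a_subset[OF fshriek_subgroup] by blast

lemma smult_fshriek_closed: "a \<in> carrier R \<Longrightarrow> x \<in> carrier F \<Longrightarrow> a \<odot>\<^bsub>E\<^esub> x \<in> carrier F"
  using SG_submodule_fshriek_set by (simp add: SG_submodule_def submodule_set_def)

lemma annihilated_by_fshriek_set: "annihilated_by E J (fshriek_set R E gE J)"
  unfolding fshriek_set_def annihilated_by_def by blast

lemma smult_fshriek: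
  assumes a: "a \<in> carrier R" and x: "x \<in> carrier F"
  shows "(J +> a) \<odot>\<^bsub>F\<^esub> x = a \<odot>\<^bsub>E\<^esub> x"
proof -
  have "a \<in> J +> a"
    using a additive_subgroup.zero_closed[OF ideal.axioms(1)[OF ideal_J]]
    by (force simp: a_r_coset_def')
  then have "(SOME b. b \<in> J +> a) \<in> J +> a" by (rule someI)
  then obtain j where j: "j \<in> J" and rep: "(SOME b. b \<in> J +> a) = j \<oplus> a"
    unfolding a_r_coset_def' by blast
  have x_carr: "x \<in> carrier E" using x by (rule fshriek_closed)
  have "(J +> a) \<odot>\<^bsub>F\<^esub> x = (j \<oplus> a) \<odot>\<^bsub>E\<^esub> x"
    using rep by (simp add: fshriek_def)
  also have "\<dots> = j \<odot>\<^bsub>E\<^esub> x \<oplus>\<^bsub>E\<^esub> a \<odot>\<^bsub>E\<^esub> x"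
    using j a x_carr J_subset E.smult_l_distr by blast
  also have "\<dots> = a \<odot>\<^bsub>E\<^esub> x"
    using annihilated_by_fshriek_set j x a x_carr E.smult_closed by (simp add: annihilated_by_def)
  finally show ?thesis .
qed

lemma abelian_group_fshriek: "abelian_group F"
proof (rule abelian_groupI)
  fix x assume x: "x \<in> carrier F"
  then have "\<ominus>\<^bsub>E\<^esub> x \<in> carrier F" "\<ominus>\<^bsub>E\<^esub> x \<oplus>\<^bsub>F\<^esub> x = \<zero>\<^bsub>F\<^esub>"
    using additive_subgroup.a_inv_closed[OF fshriek_subgroup] by (auto simp: fshriek_closed E.M.l_neg)
  then show "\<exists>y\<in>carrier F. y \<oplus>\<^bsub>F\<^esub> x = \<zero>\<^bsub>F\<^esub>" by blast
next
  show "\<zero>\<^bsub>F\<^esub> \<in> carrier F" using additive_subgroup.zero_closed[OF fshriek_subgroup] by simp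
qed (auto simp: fshriek_set_add fshriek_closed E.M.a_ac)

sublocale F: abelian_group F
  by (rule abelian_group_fshriek)

lemma a_inv_fshriek: "x \<in> carrier F \<Longrightarrow> \<ominus>\<^bsub>F\<^esub> x = \<ominus>\<^bsub>E\<^esub> x"
  using E.M.minus_equality[of "\<ominus>\<^bsub>F\<^esub> x" x] F.l_neg[of x] F.a_inv_closed[of x]
  by (simp add: fshriek_closed)

lemma finsum_fshriek: "f \<in> A \<rightarrow> carrier F \<Longrightarrow> finsum F f A = finsum E f A"
proof (induction A rule: infinite_finite_induct)
  case (infinite A)
  then show ?case by (simp add: finsum_def finprod_def)
next
  case empty
  then show ?case by simp
next
  case (insert k A)
  then have "f \<in> A \<rightarrow> carrier E" "f k \<in> carrier E" using fshriek_closed by auto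
  then show ?case using insert by (simp add: F.finsum_insert E.M.finsum_insert)
qed

lemma graded_decomposition_fshriek:
  assumes "\<And>n. c n \<in> gF n"
  shows "graded_decomposition F gF x c \<longleftrightarrow> graded_decomposition E gE x c"
proof -
  have "c \<in> support E c \<rightarrow> carrier F" using assms by (auto simp: gF_eq)
  then have "finsum F c (support E c) = finsum E c (support E c)" by (rule finsum_fshriek)
  moreover have "support F c = support E c" by (simp add: support_def)
  moreover have "(\<forall>n. c n \<in> gF n) \<and> (\<forall>n. c n \<in> gE n)" using assms by (auto simp: gF_eq)
  ultimately show ?thesis by (simp add: graded_decomposition_def)
qed

lemma component_fshriek_homogeneous: "x \<in> carrier F \<Longrightarrow> component E gE x n \<in> gF n"
  using SG_submodule_fshriek_set E.SG_submodule_iff_component_closed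
    E.M.component_homogeneous[OF fshriek_closed]
  by (auto simp: gF_eq SG_submodule_def)

lemma homogeneous_subgroup_fshriek: "additive_subgroup (gF n) F"
proof (intro additive_subgroupI F.a_group[THEN group.subgroupI])
  show "gF n \<subseteq> carrier (add_monoid F)" by (auto simp: gF_eq)
  show "gF n \<noteq> {}" using F.zero_closed E.M.homogeneous_zero by (auto simp: gF_eq)
next
  fix x assume x: "x \<in> gF n"
  have "inv\<^bsub>add_monoid F\<^esub> x = \<ominus>\<^bsub>E\<^esub> x"
    using a_inv_fshriek[of x] x by (simp only: a_inv_def gF_eq Int_iff)
  then show "inv\<^bsub>add_monoid F\<^esub> x \<in> gF n"
    using x additive_subgroup.a_inv_closed[OF fshriek_subgroup]
      additive_subgroup.a_inv_closed[OF E.M.homogeneous_subgroup] by (simp add: gF_eq)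
next
  fix x y assume "x \<in> gF n" "y \<in> gF n"
  then show "x \<otimes>\<^bsub>add_monoid F\<^esub> y \<in> gF n"
    using F.a_closed E.M.homogeneous_add by (auto simp: gF_eq)
qed

lemma component_decomposition_fshriek:
  "x \<in> carrier F \<Longrightarrow> graded_decomposition F gF x (component E gE x)"
  using graded_decomposition_fshriek component_fshriek_homogeneous
    E.M.component_decomposition[OF fshriek_closed] by blast

lemma graded_sum_fshriek: "graded_sum F gF"
  unfolding graded_sum_iff_unique_decomposition
proof (intro conjI allI ballI homogeneous_subgroup_fshriek)
  fix x assume x: "x \<in> carrier F"
  show "\<exists>!c. graded_decomposition F gF x c"
  proof (rule ex1I)
    show "graded_decomposition F gF x (component E gE x)"
      using x by (rule component_decomposition_fshriek)
  next
    fix c assume c: "graded_decomposition F gF x c"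
    moreover have "\<And>n. c n \<in> gF n" using c by (simp add: graded_decomposition_def)
    ultimately have "graded_decomposition E gE x c"
      using graded_decomposition_fshriek by blast
    then show "c = component E gE x" by (simp add: E.M.component_eqI)
  qed
qed

sublocale F: graded_group F gF
  by unfold_locales (rule graded_sum_fshriek)

lemma component_fshriek: "x \<in> carrier F \<Longrightarrow> component F gF x = component E gE x"
  using component_decomposition_fshriek by (rule F.component_eqI)

lemma lmodule_fshriek: "lmodule (R Quot J) F"
  unfolding lmodule_def
proof (intro conjI ballI)
  show "ring (R Quot J)" by (rule quotient_ring)
  show "abelian_group F" by (rule abelian_group_fshriek)
next
  fix X x assume "X \<in> carrier (R Quot J)" "x \<in> carrier F"
  then show "X \<odot>\<^bsub>F\<^esub> x \<in> carrier F"
    using carrier_quotient smult_fshriek smult_fshriek_closed by auto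
next
  fix X Y x assume "X \<in> carrier (R Quot J)" "Y \<in> carrier (R Quot J)" and x: "x \<in> carrier F"
  then obtain a b where ab: "a \<in> carrier R" "b \<in> carrier R" and XY: "X = J +> a" "Y = J +> b"
    using carrier_quotient by auto
  show "(X \<oplus>\<^bsub>R Quot J\<^esub> Y) \<odot>\<^bsub>F\<^esub> x = X \<odot>\<^bsub>F\<^esub> x \<oplus>\<^bsub>F\<^esub> Y \<odot>\<^bsub>F\<^esub> x"
    using ab x smult_fshriek[of "a \<oplus> b" x] unfolding XY
    by (simp add: smult_fshriek E.smult_l_distr fshriek_closed del: fshriek_simps(1))
next
  fix X x y assume "X \<in> carrier (R Quot J)" and xy: "x \<in> carrier F" "y \<in> carrier F"
  then obtain a where a: "a \<in> carrier R" and X: "X = J +> a"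
    using carrier_quotient by auto
  show "X \<odot>\<^bsub>F\<^esub> (x \<oplus>\<^bsub>F\<^esub> y) = X \<odot>\<^bsub>F\<^esub> x \<oplus>\<^bsub>F\<^esub> X \<odot>\<^bsub>F\<^esub> y"
    using a xy F.a_closed[OF xy] unfolding X
    by (simp add: smult_fshriek E.smult_r_distr fshriek_closed del: fshriek_simps(1))
next
  fix X Y x assume "X \<in> carrier (R Quot J)" "Y \<in> carrier (R Quot J)" and x: "x \<in> carrier F"
  then obtain a b where ab: "a \<in> carrier R" "b \<in> carrier R" and XY: "X = J +> a" "Y = J +> b"
    using carrier_quotient by auto
  show "(X \<otimes>\<^bsub>R Quot J\<^esub> Y) \<odot>\<^bsub>F\<^esub> x = X \<odot>\<^bsub>F\<^esub> (Y \<odot>\<^bsub>F\<^esub> x)"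
    using ab x smult_fshriek_closed[OF ab(2) x] smult_fshriek[of "a \<otimes> b" x] unfolding XY
    by (simp add: smult_fshriek E.smult_assoc1 fshriek_closed del: fshriek_simps(1))
next
  fix x assume "x \<in> carrier F"
  then show "\<one>\<^bsub>R Quot J\<^esub> \<odot>\<^bsub>F\<^esub> x = x"
    using smult_fshriek[of \<one> x] by (simp add: E.smult_one fshriek_closed del: fshriek_simps(1))
qed

lemma SG_module_fshriek: "SG_module (R Quot J) (quot_grading R g J) F gF"
  unfolding SG_module_def
proof (intro conjI allI impI ballI SG_ring_quotient lmodule_fshriek graded_sum_fshriek)
  fix m n X x assume m: "0 \<le> m" and "X \<in> quot_grading R g J m" and x: "x \<in> gF n"
  then obtain a where a: "a \<in> g m" and X: "X = J +> a" by (auto simp: quot_grading_eq)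
  have a_carr: "a \<in> carrier R" using a R.homogeneous_closed by blast
  have x_F: "x \<in> carrier F" "x \<in> gE n" using x by (auto simp: gF_eq)
  have "a \<odot>\<^bsub>E\<^esub> x \<in> gsub E gE {..m + n}"
    using SG_module_E m a x_F by (simp add: SG_module_def)
  moreover have "a \<odot>\<^bsub>E\<^esub> x \<in> carrier F" using smult_fshriek_closed a_carr x_F by blast
  ultimately show "X \<odot>\<^bsub>F\<^esub> x \<in> gsub F gF {..m + n}"
    unfolding X smult_fshriek[OF a_carr x_F(1)]
    by (simp add: E.M.gsub_iff_components F.gsub_iff_components component_fshriek)
qed

lemma LSG_module_fshriek:
  assumes compatible: "compatible_ideal R g J"
  shows "LSG_module (R Quot J) (quot_grading R g J) F gF"
  unfolding LSG_module_def
proof (intro conjI allI ballI SG_module_fshriek)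
  fix n m X x assume X: "X \<in> Rp_n (R Quot J) (quot_grading R g J) n" and x: "x \<in> gF m"
  have "X \<in> Rp (R Quot J) (quot_grading R g J)" using X unfolding Rp_def by blast
  then have "X \<in> {J +> a | a. a \<in> Rp R g}" using compatible by (simp add: compatible_ideal_def)
  then obtain a where "a \<in> Rp R g" and X_eq: "X = J +> a" by blast
  then obtain k where a: "a \<in> Rp_n R g k" unfolding Rp_def by blast
  have a_g: "a \<in> g k" using a by (simp add: Rp_n_def)
  have a_carr: "a \<in> carrier R" using a_g R.homogeneous_closed by blast
  have x_F: "x \<in> carrier F" "x \<in> gE m" using x by (auto simp: gF_eq)
  show "X \<odot>\<^bsub>F\<^esub> x \<in> gF (n + m)"
  proof (cases "k = n")
    case True
    then have "a \<odot>\<^bsub>E\<^esub> x \<in> gE (n + m)" using LSG_E a x_F by (simp add: LSG_module_def)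
    then show ?thesis
      using smult_fshriek[OF a_carr x_F(1)] smult_fshriek_closed[OF a_carr x_F(1)] X_eq
      by (simp add: gF_eq)
  next
    case False
    have "X \<in> quot_grading R g J n" using X by (simp add: Rp_n_def)
    moreover have "X \<in> quot_grading R g J k" using a_g X_eq by (simp add: quot_grading_eq)
    ultimately have "X = \<zero>\<^bsub>R Quot J\<^esub>" using Q.homogeneous_disjoint[OF _ _ False] by blast
    then have "a \<in> J" using X_eq rcos_eq_J_iff[OF a_carr] zero_quotient by simp
    then have "a \<odot>\<^bsub>E\<^esub> x = \<zero>\<^bsub>E\<^esub>"
      using annihilated_by_fshriek_set x_F by (simp add: annihilated_by_def)
    then show ?thesis
      using smult_fshriek[OF a_carr x_F(1)] X_eq F.zero_closed E.M.homogeneous_zero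
      by (simp add: gF_eq)
  qed
qed

lemma gr_hom_restrict_scalars:
  assumes \<psi>: "gr_hom (R Quot J) X gX F gF \<psi>"
  shows "gr_hom R (restrict_scalars ((+>) J) X) gX E gE \<psi>"
  unfolding gr_hom_def
proof (intro conjI ballI allI)
  have image: "\<psi> ` carrier X \<subseteq> carrier F" using \<psi> by (simp add: gr_hom_def)
  then show "\<psi> ` carrier (restrict_scalars ((+>) J) X) \<subseteq> carrier E" using fshriek_closed by auto
  fix a x assume a: "a \<in> carrier R" and x: "x \<in> carrier (restrict_scalars ((+>) J) X)"
  have "\<psi> ((J +> a) \<odot>\<^bsub>X\<^esub> x) = (J +> a) \<odot>\<^bsub>F\<^esub> \<psi> x"
    using \<psi> a x by (simp add: gr_hom_def)
  then show "\<psi> (a \<odot>\<^bsub>restrict_scalars ((+>) J) X\<^esub> x) = a \<odot>\<^bsub>E\<^esub> \<psi> x"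
    using smult_fshriek[OF a] image x by auto
qed (use \<psi> in \<open>auto simp: gr_hom_def gF_eq\<close>)

lemma gr_hom_fshriek:
  fixes M :: "('a set, 'm) module"
  assumes lmodule_M: "lmodule (R Quot J) M" and graded_M: "graded_sum M gM"
    and \<psi>: "gr_hom R (restrict_scalars ((+>) J) M) gM E gE \<psi>"
  shows "gr_hom (R Quot J) M gM F gF \<psi>"
proof -
  let ?M = "restrict_scalars ((+>) J) M"
  have smult: "\<psi> ((J +> a) \<odot>\<^bsub>M\<^esub> x) = a \<odot>\<^bsub>E\<^esub> \<psi> x" if "a \<in> carrier R" "x \<in> carrier M" for a x
    using \<psi> that by (simp add: gr_hom_def)
  have "SG_submodule R E gE (\<psi> ` carrier ?M)"
    using lmodule_restrict_scalars[OF quot.ring_hom_ring_axioms lmodule_M] graded_M \<psi>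
    by (intro E.SG_submodule_image) (simp_all add: graded_sum_restrict_scalars)
  moreover have "annihilated_by E J (\<psi> ` carrier ?M)"
    unfolding annihilated_by_def
  proof (intro ballI)
    fix j u assume j: "j \<in> J" and "u \<in> \<psi> ` carrier ?M"
    then obtain x where x: "x \<in> carrier M" and u: "u = \<psi> x" by auto
    have j_carr: "j \<in> carrier R" using j J_subset by blast
    have "J +> j = J +> \<zero>" using j j_carr rcos_eq_J_iff zero_quotient by simp
    then have "j \<odot>\<^bsub>E\<^esub> u = \<zero> \<odot>\<^bsub>E\<^esub> \<psi> x"
      using smult[OF j_carr x] smult[OF zero_closed x] u by simp
    then show "j \<odot>\<^bsub>E\<^esub> u = \<zero>\<^bsub>E\<^esub>"
      using \<psi> x E.smult_l_null by (auto simp: gr_hom_def)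
  qed
  ultimately have image: "\<psi> ` carrier M \<subseteq> carrier F"
    unfolding fshriek_simps restrict_scalars_simps by (rule fshriek_set_greatest)
  show ?thesis
    unfolding gr_hom_def
  proof (intro conjI ballI allI image)
    fix X x assume "X \<in> carrier (R Quot J)" and x: "x \<in> carrier M"
    then obtain a where a: "a \<in> carrier R" and X: "X = J +> a" using carrier_quotient by auto
    have "\<psi> x \<in> carrier F" using image x by blast
    then show "\<psi> (X \<odot>\<^bsub>M\<^esub> x) = X \<odot>\<^bsub>F\<^esub> \<psi> x"
      unfolding X smult[OF a x] by (rule smult_fshriek[OF a, symmetric])
  next
    fix n
    have "gM n \<subseteq> carrier M"
      using graded_M unfolding graded_sum_def by (blast dest: additive_subgroup.a_subset)
    then show "\<psi> ` gM n \<subseteq> gF n" using \<psi> image by (auto simp: gr_hom_def gF_eq)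
  qed (use \<psi> in \<open>auto simp: gr_hom_def\<close>)
qed

lemma T_closed_fshriek:
  assumes compatible: "compatible_ideal R g J" and T_closed_E: "T_closed TYPE('m) R g E gE"
  shows "T_closed TYPE('m) (R Quot J) (quot_grading R g J) F gF"
  unfolding T_closed_def
proof (intro conjI allI impI)
  show "LSG_module (R Quot J) (quot_grading R g J) F gF"
    using compatible by (rule LSG_module_fshriek)
  fix M :: "('a set, 'm) module" and gM N \<phi>
  assume "LSG_module (R Quot J) (quot_grading R g J) M gM \<and> SG_submodule (R Quot J) M gM N \<and>
    quotient_torsion (R Quot J) (quot_grading R g J) M N \<and>
    gr_hom (R Quot J) (M\<lparr>carrier := N\<rparr>) (\<lambda>n. N \<inter> gM n) F gF \<phi>"
  then have LSG_M: "LSG_module (R Quot J) (quot_grading R g J) M gM"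
    and SG_N: "SG_submodule (R Quot J) M gM N"
    and torsion: "quotient_torsion (R Quot J) (quot_grading R g J) M N"
    and \<phi>: "gr_hom (R Quot J) (M\<lparr>carrier := N\<rparr>) (\<lambda>n. N \<inter> gM n) F gF \<phi>" by blast+
  let ?M = "restrict_scalars ((+>) J) M"
  have "gr_hom R (?M\<lparr>carrier := N\<rparr>) (\<lambda>n. N \<inter> gM n) E gE \<phi>"
    using gr_hom_restrict_scalars[OF \<phi>] by (simp add: restrict_scalars_carrier_update)
  then have extension: "(\<exists>\<psi>. gr_hom R ?M gM E gE \<psi> \<and> (\<forall>x\<in>N. \<psi> x = \<phi> x)) \<and>
      (\<forall>\<psi>1 \<psi>2. gr_hom R ?M gM E gE \<psi>1 \<and> (\<forall>x\<in>N. \<psi>1 x = \<phi> x) \<and>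
        gr_hom R ?M gM E gE \<psi>2 \<and> (\<forall>x\<in>N. \<psi>2 x = \<phi> x) \<longrightarrow> (\<forall>x\<in>carrier ?M. \<psi>1 x = \<psi>2 x))"
    using T_closed_E LSG_restrict_scalars[OF LSG_M] SG_submodule_restrict_scalars[OF SG_N]
      quotient_torsion_restrict_scalars[OF torsion]
    unfolding T_closed_def by blast
  have "lmodule (R Quot J) M" "graded_sum M gM"
    using LSG_M by (simp_all add: LSG_module_def SG_module_def)
  then show "\<exists>\<psi>. gr_hom (R Quot J) M gM F gF \<psi> \<and> (\<forall>x\<in>N. \<psi> x = \<phi> x)"
    using extension gr_hom_fshriek by blast
  fix \<psi>1 \<psi>2
  assume "gr_hom (R Quot J) M gM F gF \<psi>1 \<and> (\<forall>x\<in>N. \<psi>1 x = \<phi> x) \<and>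
    gr_hom (R Quot J) M gM F gF \<psi>2 \<and> (\<forall>x\<in>N. \<psi>2 x = \<phi> x)"
  then show "\<forall>x\<in>carrier M. \<psi>1 x = \<psi>2 x"
    using extension gr_hom_restrict_scalars[of M gM \<psi>1] gr_hom_restrict_scalars[of M gM \<psi>2] by simp
qed

end

theorem mainTheorem10:
  fixes R :: "('a, 'b) ring_scheme" and g :: "int \<Rightarrow> 'a set"
    and J :: "'a set"
    and E :: "('a, 'e) module" and gE :: "int \<Rightarrow> 'e set"
  assumes "schematic R g"
    and "SG_ideal R g J"
    and "compatible_ideal R g J"
    and "LSG_module R g E gE"
    and "T_closed TYPE('m) R g E gE"
  shows "LSG_module (R Quot J) (quot_grading R g J) (fshriek R E gE J) (fshriek_grading R E gE J)
     \<and> T_closed TYPE('m) (R Quot J) (quot_grading R g J) (fshriek R E gE J) (fshriek_grading R E gE J)"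
proof -
  interpret fshriek_setting R g E gE J
    using assms(4,2) by unfold_locales
  show ?thesis
    using LSG_module_fshriek[OF assms(3)] T_closed_fshriek[OF assms(3,5)] by blast
qed

end
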